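(* Let $\alpha\in\ell^2$, $\epsilon>0$ and $N\ge1$ an integer, and suppose that the $(\epsilon,L)$-sequence associated with $\alpha$ and $\epsilon$ has length at least $N$, i.e. $c_N<\infty$. Then $a_N(R_\alpha)\ge\epsilon/\sqrt2$.
   Context: $\mathbb{N}=\{0,1,2,\dots\}$; $\ell^2$ is the space of square-summable functions $\mathbb{N}\to\mathbb{C}$; $(R_\alpha f)(k)=\alpha_k\sum_{j=0}^kf(j)$. Approximation numbers: $a_{n+1}(T)=\inf\{\|T-P\|:P$ linear on $\ell^2$ with rank $\le n\}$. For a finite natural interval $I$: $\mu(I)=\sum_{k\in I}|\alpha_k|^2$, $\|f\|_{2,I}=(\sum_{k\in I}|f(k)|^2)^{1/2}$, $l(I,f)=\sum_{k\in I}\sum_{n\in I\setminus\{k\}}|\alpha_k\alpha_n\sum_{j=\min(k,n)+1}^{\max(k,n)}f(j)|^2$, $L(I)=(\sup_{\|f\|_{2,I}\le1}l(I,f)/\mu(I))^{1/2}$ (sup over $f$ supported in $I$; $L(I)=0$ if $\alpha$ vanishes on $I$). $(\epsilon,L)$-sequence: $c_0=0$, $c_{k+1}=\inf\{t\in\mathbb{N}:t>c_k,\ L([c_k,t-1])>\epsilon\}$ ($\inf\emptyset=+\infty$). *)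

theory Defs
  imports "HOL-Analysis.Analysis" "HOL-Library.Extended_Nat"
begin

definition l2 :: "(nat \<Rightarrow> complex) set" where
  "l2 = {f. summable (\<lambda>k. (cmod (f k))\<^sup>2)}"

text \<open>The l2 norm, with value infinity for non-square-summable sequences.\<close>
definition l2norm :: "(nat \<Rightarrow> complex) \<Rightarrow> ennreal" where
  "l2norm g = (SUP n. ennreal (sqrt (\<Sum>k<n. (cmod (g k))\<^sup>2)))"

definition opnorm :: "((nat \<Rightarrow> complex) \<Rightarrow> (nat \<Rightarrow> complex)) \<Rightarrow> ennreal" where
  "opnorm T = (SUP f \<in> {f \<in> l2. l2norm f \<le> 1}. l2norm (T f))"

definition linear_l2 :: "((nat \<Rightarrow> complex) \<Rightarrow> (nat \<Rightarrow> complex)) \<Rightarrow> bool" where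
  "linear_l2 P \<longleftrightarrow>
     (\<forall>f\<in>l2. \<forall>g\<in>l2. P (\<lambda>k. f k + g k) = (\<lambda>k. P f k + P g k)) \<and>
     (\<forall>f\<in>l2. \<forall>c::complex. P (\<lambda>k. c * f k) = (\<lambda>k. c * P f k))"

definition rank_le :: "((nat \<Rightarrow> complex) \<Rightarrow> (nat \<Rightarrow> complex)) \<Rightarrow> nat \<Rightarrow> bool" where
  "rank_le P n \<longleftrightarrow> (\<exists>g :: nat \<Rightarrow> nat \<Rightarrow> complex. (\<forall>i<n. g i \<in> l2) \<and>
     (\<forall>f\<in>l2. \<exists>c :: nat \<Rightarrow> complex. P f = (\<lambda>k. \<Sum>i<n. c i * g i k)))"

text \<open>Approximation numbers: a (n+1) T = inf of norm (T - P) over P of rank at most n.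
  Only meaningful for N \<ge> 1.\<close>
definition approx_num :: "((nat \<Rightarrow> complex) \<Rightarrow> (nat \<Rightarrow> complex)) \<Rightarrow> nat \<Rightarrow> ennreal" where
  "approx_num T N = (INF P \<in> {P. linear_l2 P \<and> rank_le P (N - 1)}.
       opnorm (\<lambda>f k. T f k - P f k))"

definition R_op :: "(nat \<Rightarrow> complex) \<Rightarrow> (nat \<Rightarrow> complex) \<Rightarrow> (nat \<Rightarrow> complex)" where
  "R_op \<alpha> f = (\<lambda>k. \<alpha> k * (\<Sum>j\<le>k. f j))"

definition mu :: "(nat \<Rightarrow> complex) \<Rightarrow> nat \<Rightarrow> nat \<Rightarrow> real" where
  "mu \<alpha> a b = (\<Sum>k\<in>{a..b}. (cmod (\<alpha> k))\<^sup>2)"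

definition lI :: "(nat \<Rightarrow> complex) \<Rightarrow> nat \<Rightarrow> nat \<Rightarrow> (nat \<Rightarrow> complex) \<Rightarrow> real" where
  "lI \<alpha> a b f = (\<Sum>k\<in>{a..b}. \<Sum>n\<in>{a..b} - {k}.
      (cmod (\<alpha> k * \<alpha> n * (\<Sum>j\<in>{min k n + 1..max k n}. f j)))\<^sup>2)"

definition LI :: "(nat \<Rightarrow> complex) \<Rightarrow> nat \<Rightarrow> nat \<Rightarrow> real" where
  "LI \<alpha> a b = (if mu \<alpha> a b = 0 then 0 else
     sqrt (Sup {lI \<alpha> a b f / mu \<alpha> a b | f.
        (\<forall>k. k \<notin> {a..b} \<longrightarrow> f k = 0) \<and> (\<Sum>k\<in>{a..b}. (cmod (f k))\<^sup>2) \<le> 1}))"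

text \<open>The (epsilon,L)-sequence; infinity encodes inf of the empty set.\<close>
primrec eLseq :: "(nat \<Rightarrow> complex) \<Rightarrow> real \<Rightarrow> nat \<Rightarrow> enat" where
  "eLseq \<alpha> \<epsilon> 0 = 0"
| "eLseq \<alpha> \<epsilon> (Suc m) = (case eLseq \<alpha> \<epsilon> m of
      \<infinity> \<Rightarrow> \<infinity>
    | enat c \<Rightarrow> (if \<exists>t. t > c \<and> LI \<alpha> c (t - 1) > \<epsilon>
                 then enat (LEAST t. t > c \<and> LI \<alpha> c (t - 1) > \<epsilon>) else \<infinity>))"

end

theory Submission
  imports Defs
begin

(*
  The (\<epsilon>,L)-sequence cuts {0..<c N} into N blocks I j = {c j..<c (Suc j)} with L(I j) > \<epsilon>,
  so each block carries a unit vector f j, supported in I j, with l(I j, f j) > \<epsilon>^2 \<mu>(I j).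
  By Lagrange's identity l(I, g) \<le> 2 \<mu>(I) \<parallel>R\<^sub>\<alpha> g\<parallel>_I^2, and l(I, g) is quadratic in g and
  only sees g on I. Hence every combination F = \<Sum> z j f j satisfies
  \<parallel>R\<^sub>\<alpha> F\<parallel>^2 \<ge> \<Sum>j \<parallel>R\<^sub>\<alpha> F\<parallel>_(I j)^2 \<ge> \<epsilon>^2/2 \<Sum> |z j|^2 = \<epsilon>^2/2 \<parallel>F\<parallel>^2.
  A map P of rank < N kills some unit vector F of this N-dimensional span, and there
  \<parallel>(R\<^sub>\<alpha> - P) F\<parallel> = \<parallel>R\<^sub>\<alpha> F\<parallel> \<ge> \<epsilon>/sqrt 2.
*)

section \<open>Finite-rank maps on l2\<close>

lemma homogeneous_system_nontrivial_solution:
  fixes a :: "'i \<Rightarrow> nat \<Rightarrow> 'a::field"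
  assumes "finite S" and "M < card S"
  shows "\<exists>x. (\<exists>i\<in>S. x i \<noteq> 0) \<and> (\<forall>m<M. (\<Sum>i\<in>S. x i * a i m) = 0)"
  using assms
proof (induction M arbitrary: S a)
  case 0
  then obtain i where "i \<in> S" by fastforce
  then show ?case by (intro exI[of _ "\<lambda>_. 1"]) auto
next
  case (Suc M)
  show ?case
  proof (cases "\<forall>i\<in>S. a i M = 0")
    case True
    then show ?thesis using Suc.IH[of S a] Suc.prems by (auto simp: less_Suc_eq)
  next
    case False
    then obtain i0 where i0: "i0 \<in> S" "a i0 M \<noteq> 0" by auto
    \<comment> \<open>eliminate the unknown x i0 by means of equation M\<close>
    define b where "b i m = a i m - a i M / a i0 M * a i0 m" for i m
    have "M < card (S - {i0})" using Suc.prems i0 by simp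
    then obtain y where y: "\<exists>i\<in>S - {i0}. y i \<noteq> 0" "\<forall>m<M. (\<Sum>i\<in>S - {i0}. y i * b i m) = 0"
      using Suc.IH[of "S - {i0}" b] Suc.prems(1) by blast
    define x where "x i = (if i = i0 then - (\<Sum>j\<in>S - {i0}. y j * a j M) / a i0 M else y i)" for i
    have "(\<Sum>i\<in>S. x i * a i m) = x i0 * a i0 m + (\<Sum>i\<in>S - {i0}. y i * a i m)" for m
      using i0 Suc.prems(1) by (simp add: sum.remove x_def)
    also have "\<dots> m = (\<Sum>i\<in>S - {i0}. y i * b i m)" for m
      by (simp add: x_def b_def algebra_simps sum_subtractf sum_distrib_left sum_divide_distrib)
    finally have reduced: "(\<Sum>i\<in>S. x i * a i m) = (\<Sum>i\<in>S - {i0}. y i * b i m)" for m .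
    have "b i M = 0" for i using i0 by (simp add: b_def)
    then have "\<forall>m<Suc M. (\<Sum>i\<in>S. x i * a i m) = 0"
      using y(2) by (auto simp: reduced less_Suc_eq)
    moreover have "\<exists>i\<in>S. x i \<noteq> 0" using y(1) by (auto simp: x_def)
    ultimately show ?thesis by blast
  qed
qed

lemma l2_add:
  assumes "f \<in> l2" and "g \<in> l2"
  shows "(\<lambda>k. f k + g k) \<in> l2"
proof -
  have bound: "norm ((cmod (f k + g k))\<^sup>2) \<le> 2 * (cmod (f k))\<^sup>2 + 2 * (cmod (g k))\<^sup>2" for k
  proof -
    have "(cmod (f k + g k))\<^sup>2 \<le> (cmod (f k) + cmod (g k))\<^sup>2"
      by (simp add: power_mono norm_triangle_ineq)
    also have "\<dots> \<le> 2 * (cmod (f k))\<^sup>2 + 2 * (cmod (g k))\<^sup>2"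
      using sum_squares_bound[of "cmod (f k)" "cmod (g k)"] by (simp add: power2_sum)
    finally show ?thesis by simp
  qed
  have "summable (\<lambda>k. 2 * (cmod (f k))\<^sup>2 + 2 * (cmod (g k))\<^sup>2)"
    using assms unfolding l2_def by (simp add: summable_add summable_mult)
  then show ?thesis
    unfolding l2_def mem_Collect_eq by (rule summable_comparison_test') (rule bound)
qed

lemma l2_mult: "f \<in> l2 \<Longrightarrow> (\<lambda>k. z * f k) \<in> l2"
  unfolding l2_def by (simp add: norm_mult power_mult_distrib summable_mult)

lemma l2_sum: "finite S \<Longrightarrow> \<forall>i\<in>S. g i \<in> l2 \<Longrightarrow> (\<lambda>k. \<Sum>i\<in>S. z i * g i k) \<in> l2"
proof (induction S rule: finite_induct)
  case empty
  then show ?case by (simp add: l2_def)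
next
  case (insert i S)
  then show ?case using l2_add[OF l2_mult[of "g i" "z i"]] by simp
qed

lemma l2_finite_support: "\<forall>k\<ge>C. g k = 0 \<Longrightarrow> g \<in> l2"
  unfolding l2_def by (rule CollectI, rule summable_finite[of "{..<C}"]) auto

lemma l2norm_ge_partial_sum: "ennreal (sqrt (\<Sum>k<n. (cmod (g k))\<^sup>2)) \<le> l2norm g"
  unfolding l2norm_def by (rule SUP_upper) simp

lemma l2norm_finite_support:
  assumes "\<forall>k\<ge>C. g k = 0"
  shows "l2norm g = ennreal (sqrt (\<Sum>k<C. (cmod (g k))\<^sup>2))"
proof (rule antisym)
  have "(\<Sum>k<n. (cmod (g k))\<^sup>2) \<le> (\<Sum>k<C. (cmod (g k))\<^sup>2)" for n
  proof -
    have "(\<Sum>k<n. (cmod (g k))\<^sup>2) \<le> (\<Sum>k<max n C. (cmod (g k))\<^sup>2)"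
      by (intro sum_mono2) auto
    also have "\<dots> = (\<Sum>k<C. (cmod (g k))\<^sup>2)"
      using assms by (intro sum.mono_neutral_right) auto
    finally show ?thesis .
  qed
  then show "l2norm g \<le> ennreal (sqrt (\<Sum>k<C. (cmod (g k))\<^sup>2))"
    unfolding l2norm_def by (intro SUP_least ennreal_leI) simp
qed (rule l2norm_ge_partial_sum)

lemma linear_l2_sum:
  assumes "linear_l2 P" and "finite S" and "\<forall>i\<in>S. g i \<in> l2"
  shows "P (\<lambda>k. \<Sum>i\<in>S. z i * g i k) = (\<lambda>k. \<Sum>i\<in>S. z i * P (g i) k)"
proof -
  have add: "\<And>f g. f \<in> l2 \<Longrightarrow> g \<in> l2 \<Longrightarrow> P (\<lambda>k. f k + g k) = (\<lambda>k. P f k + P g k)"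
    and mult: "\<And>f w. f \<in> l2 \<Longrightarrow> P (\<lambda>k. w * f k) = (\<lambda>k. w * P f k)"
    using assms(1) by (auto simp: linear_l2_def)
  from assms(2,3) show ?thesis
  proof (induction S rule: finite_induct)
    case empty
    show ?case using mult[of "\<lambda>_. 0" 0] by (simp add: l2_def)
  next
    case (insert i S)
    then show ?case
      using add[OF l2_mult[of "g i" "z i"] l2_sum[of S g z]] mult[of "g i" "z i"] by simp
  qed
qed

lemma rank_le_obtains_unit_kernel_combination:
  assumes "linear_l2 P" and "rank_le P n" and "n < m" and "\<forall>i<m. g i \<in> l2"
  obtains z where "(\<Sum>i<m. (cmod (z i))\<^sup>2) = 1" and "P (\<lambda>k. \<Sum>i<m. z i * g i k) = (\<lambda>k. 0)"
proof -
  obtain h where "\<forall>f\<in>l2. \<exists>b. P f = (\<lambda>k. \<Sum>l<n. b l * h l k)"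
    using assms(2) unfolding rank_le_def by blast
  then have "\<forall>i<m. \<exists>b. P (g i) = (\<lambda>k. \<Sum>l<n. b l * h l k)"
    using assms(4) by blast
  then obtain b where b: "\<forall>i<m. P (g i) = (\<lambda>k. \<Sum>l<n. b i l * h l k)"
    by metis
  obtain y where y_nonzero: "\<exists>i\<in>{..<m}. y i \<noteq> 0" and y_solves: "\<forall>l<n. (\<Sum>i<m. y i * b i l) = 0"
    using homogeneous_system_nontrivial_solution[of "{..<m}" n b] assms(3) by auto
  obtain i where "i < m" and "y i \<noteq> 0" using y_nonzero by blast
  then have y_norm_pos: "0 < (\<Sum>i<m. (cmod (y i))\<^sup>2)"
    by (intro sum_pos2[of _ i]) auto
  define s where "s = sqrt (\<Sum>i<m. (cmod (y i))\<^sup>2)"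
  define z where "z i = y i / s" for i
  have "(\<Sum>i<m. (cmod (z i))\<^sup>2) = 1"
    using y_norm_pos by (simp add: z_def s_def norm_divide power_divide flip: sum_divide_distrib)
  moreover have "P (\<lambda>k. \<Sum>i<m. z i * g i k) = (\<lambda>k. 0)"
  proof -
    have "P (\<lambda>k. \<Sum>i<m. z i * g i k) = (\<lambda>k. \<Sum>i<m. z i * P (g i) k)"
      using assms(4) by (intro linear_l2_sum[OF assms(1)]) auto
    also have "\<dots> = (\<lambda>k. \<Sum>l<n. (\<Sum>i<m. z i * b i l) * h l k)"
      using b by (simp add: sum_distrib_left sum_distrib_right sum.swap[of _ "{..<m}"] mult.assoc)
    also have "\<dots> = (\<lambda>k. 0)"
      using y_solves by (simp add: z_def flip: sum_divide_distrib)
    finally show ?thesis .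
  qed
  ultimately show ?thesis by (rule that)
qed

lemma approx_num_geI:
  assumes "\<And>P. linear_l2 P \<Longrightarrow> rank_le P (N - 1) \<Longrightarrow>
    \<exists>f\<in>l2. l2norm f \<le> 1 \<and> \<delta> \<le> l2norm (\<lambda>k. T f k - P f k)"
  shows "\<delta> \<le> approx_num T N"
  unfolding approx_num_def
proof (rule INF_greatest, clarify)
  fix P assume "linear_l2 P" and "rank_le P (N - 1)"
  then obtain f where "f \<in> l2" "l2norm f \<le> 1" "\<delta> \<le> l2norm (\<lambda>k. T f k - P f k)"
    using assms by blast
  then show "\<delta> \<le> opnorm (\<lambda>f k. T f k - P f k)"
    unfolding opnorm_def by (intro SUP_upper2[of f]) auto
qed

section \<open>The local quantities l and L\<close>

lemma lagrange_identity_complex: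
  fixes x y :: "'i \<Rightarrow> complex"
  shows "(\<Sum>k\<in>I. \<Sum>n\<in>I. (cmod (y n * x k - y k * x n))\<^sup>2)
      = 2 * (\<Sum>k\<in>I. (cmod (y k))\<^sup>2) * (\<Sum>k\<in>I. (cmod (x k))\<^sup>2) - 2 * (cmod (\<Sum>k\<in>I. x k * cnj (y k)))\<^sup>2"
proof -
  define z where "z = (\<Sum>k\<in>I. x k * cnj (y k))"
  have expand: "complex_of_real ((cmod (y n * x k - y k * x n))\<^sup>2)
     = x k * cnj (x k) * (y n * cnj (y n)) + y k * cnj (y k) * (x n * cnj (x n))
       - x k * cnj (y k) * cnj (x n * cnj (y n)) - cnj (x k * cnj (y k)) * (x n * cnj (y n))" for k n
    unfolding complex_norm_square by (simp add: algebra_simps)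
  have "complex_of_real (\<Sum>k\<in>I. \<Sum>n\<in>I. (cmod (y n * x k - y k * x n))\<^sup>2)
     = 2 * (\<Sum>k\<in>I. y k * cnj (y k)) * (\<Sum>k\<in>I. x k * cnj (x k)) - 2 * (z * cnj z)"
    unfolding of_real_sum expand z_def
    by (simp only: sum.distrib sum_subtractf sum_product[symmetric] cnj_sum) (simp add: algebra_simps)
  also have "\<dots> = complex_of_real (2 * (\<Sum>k\<in>I. (cmod (y k))\<^sup>2) * (\<Sum>k\<in>I. (cmod (x k))\<^sup>2) - 2 * (cmod z)\<^sup>2)"
    by (simp only: of_real_diff of_real_mult of_real_numeral of_real_sum complex_norm_square)
  finally show ?thesis unfolding z_def of_real_eq_iff .
qed

lemma sum_Suc_atLeastAtMost_eq_diff: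
  fixes f :: "nat \<Rightarrow> 'a::ab_group_add"
  assumes "k \<le> n"
  shows "(\<Sum>j\<in>{Suc k..n}. f j) = (\<Sum>j\<le>n. f j) - (\<Sum>j\<le>k. f j)"
proof -
  have "{..n} = {..k} \<union> {Suc k..n}" using assms by auto
  then show ?thesis by (simp add: sum.union_disjoint)
qed

lemma lI_eq_R_op:
  "lI \<alpha> a b f = (\<Sum>k\<in>{a..b}. \<Sum>n\<in>{a..b} - {k}. (cmod (\<alpha> n * R_op \<alpha> f k - \<alpha> k * R_op \<alpha> f n))\<^sup>2)"
proof -
  have "cmod (\<alpha> k * \<alpha> n * (\<Sum>j\<in>{min k n + 1..max k n}. f j))
      = cmod (\<alpha> n * R_op \<alpha> f k - \<alpha> k * R_op \<alpha> f n)" for k n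
  proof (cases "k \<le> n")
    case True
    then have "\<alpha> k * \<alpha> n * (\<Sum>j\<in>{min k n + 1..max k n}. f j) = - (\<alpha> n * R_op \<alpha> f k - \<alpha> k * R_op \<alpha> f n)"
      by (simp add: sum_Suc_atLeastAtMost_eq_diff R_op_def algebra_simps)
    then show ?thesis by (metis norm_minus_cancel)
  next
    case False
    then have "\<alpha> k * \<alpha> n * (\<Sum>j\<in>{min k n + 1..max k n}. f j) = \<alpha> n * R_op \<alpha> f k - \<alpha> k * R_op \<alpha> f n"
      by (simp add: sum_Suc_atLeastAtMost_eq_diff R_op_def algebra_simps)
    then show ?thesis by simp
  qed
  then show ?thesis unfolding lI_def by simp
qed

lemma lI_le_R_op: "lI \<alpha> a b f \<le> 2 * mu \<alpha> a b * (\<Sum>k\<in>{a..b}. (cmod (R_op \<alpha> f k))\<^sup>2)"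
proof -
  have "lI \<alpha> a b f \<le> (\<Sum>k\<in>{a..b}. \<Sum>n\<in>{a..b}. (cmod (\<alpha> n * R_op \<alpha> f k - \<alpha> k * R_op \<alpha> f n))\<^sup>2)"
    unfolding lI_eq_R_op by (intro sum_mono sum_mono2) auto
  also have "\<dots> \<le> 2 * mu \<alpha> a b * (\<Sum>k\<in>{a..b}. (cmod (R_op \<alpha> f k))\<^sup>2)"
    unfolding lagrange_identity_complex mu_def by simp
  finally show ?thesis .
qed

lemma lI_mult_on_interval:
  assumes "\<forall>k\<in>{a..b}. f k = z * g k"
  shows "lI \<alpha> a b f = (cmod z)\<^sup>2 * lI \<alpha> a b g"
proof -
  have "(cmod (\<alpha> k * \<alpha> n * (\<Sum>j\<in>{min k n + 1..max k n}. f j)))\<^sup>2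
      = (cmod z)\<^sup>2 * (cmod (\<alpha> k * \<alpha> n * (\<Sum>j\<in>{min k n + 1..max k n}. g j)))\<^sup>2"
    if "k \<in> {a..b}" "n \<in> {a..b}" for k n
  proof -
    have "{min k n + 1..max k n} \<subseteq> {a..b}" using that by (auto simp: min_def max_def)
    then have "(\<Sum>j\<in>{min k n + 1..max k n}. f j) = z * (\<Sum>j\<in>{min k n + 1..max k n}. g j)"
      using assms by (auto simp: sum_distrib_left intro!: sum.cong)
    then show ?thesis by (simp add: norm_mult power_mult_distrib)
  qed
  then show ?thesis
    unfolding lI_def sum_distrib_left by (intro sum.cong refl) auto
qed

lemma mu_nonneg: "0 \<le> mu \<alpha> a b"
  unfolding mu_def by (simp add: sum_nonneg)

lemma LI_gt_obtains_lI_gt: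
  assumes "0 \<le> \<epsilon>" and "\<epsilon> < LI \<alpha> a b"
  obtains f where "\<forall>k. k \<notin> {a..b} \<longrightarrow> f k = 0" and "(\<Sum>k\<in>{a..b}. (cmod (f k))\<^sup>2) \<le> 1"
    and "\<epsilon>\<^sup>2 * mu \<alpha> a b < lI \<alpha> a b f" and "0 < mu \<alpha> a b"
proof -
  define S where "S = {lI \<alpha> a b f / mu \<alpha> a b | f.
    (\<forall>k. k \<notin> {a..b} \<longrightarrow> f k = 0) \<and> (\<Sum>k\<in>{a..b}. (cmod (f k))\<^sup>2) \<le> 1}"
  have "mu \<alpha> a b \<noteq> 0" using assms by (auto simp: LI_def)
  then have mu_pos: "0 < mu \<alpha> a b" using mu_nonneg[of \<alpha> a b] by simp
  have "sqrt (\<epsilon>\<^sup>2) < sqrt (Sup S)"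
    using assms mu_pos by (simp add: LI_def S_def)
  then have "\<epsilon>\<^sup>2 < Sup S" by (simp only: real_sqrt_less_iff)
  moreover have "0 \<in> S"
    unfolding S_def by (rule CollectI, rule exI[of _ "\<lambda>_. 0"]) (simp add: lI_def)
  \<comment> \<open>if S is unbounded, Sup S is a junk value, but S then has large elements anyway\<close>
  ultimately have "\<exists>x\<in>S. \<epsilon>\<^sup>2 < x"
    by (metis bdd_above_def empty_iff less_cSup_iff not_le_imp_less)
  then show ?thesis
    using that mu_pos by (auto simp: S_def pos_less_divide_eq)
qed

definition LI_witness :: "(nat \<Rightarrow> complex) \<Rightarrow> real \<Rightarrow> nat \<Rightarrow> nat \<Rightarrow> (nat \<Rightarrow> complex) \<Rightarrow> bool" where
  "LI_witness \<alpha> \<epsilon> a b f \<longleftrightarrow> (\<forall>k. k \<notin> {a..b} \<longrightarrow> f k = 0) \<and> (\<Sum>k\<in>{a..b}. (cmod (f k))\<^sup>2) = 1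
     \<and> 0 < mu \<alpha> a b \<and> \<epsilon>\<^sup>2 * mu \<alpha> a b < lI \<alpha> a b f"

lemma LI_witness_exists:
  assumes "0 \<le> \<epsilon>" and "\<epsilon> < LI \<alpha> a b"
  obtains f where "LI_witness \<alpha> \<epsilon> a b f"
proof -
  obtain g where supp: "\<forall>k. k \<notin> {a..b} \<longrightarrow> g k = 0" and norm: "(\<Sum>k\<in>{a..b}. (cmod (g k))\<^sup>2) \<le> 1"
    and large: "\<epsilon>\<^sup>2 * mu \<alpha> a b < lI \<alpha> a b g" and mu_pos: "0 < mu \<alpha> a b"
    using LI_gt_obtains_lI_gt[OF assms] .
  define s where "s = (\<Sum>k\<in>{a..b}. (cmod (g k))\<^sup>2)"
  have lI_pos: "0 < lI \<alpha> a b g"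
    using large mu_pos by (smt (verit) mult_nonneg_nonneg zero_le_power2)
  have "s \<noteq> 0"
  proof
    assume "s = 0"
    then have "\<forall>k\<in>{a..b}. g k = 0 * g k" by (simp add: s_def sum_nonneg_eq_0_iff)
    then show False using lI_pos lI_mult_on_interval[of a b g 0 g \<alpha>] by simp
  qed
  then have s_pos: "0 < s" by (simp add: s_def order_less_le sum_nonneg)
  define f where "f k = g k / sqrt s" for k
  have scaled: "\<forall>k\<in>{a..b}. f k = complex_of_real (1 / sqrt s) * g k"
    by (simp add: f_def)
  have "(\<Sum>k\<in>{a..b}. (cmod (f k))\<^sup>2) = s / s"
    using s_pos by (simp add: f_def s_def norm_divide power_divide flip: sum_divide_distrib)
  moreover have "lI \<alpha> a b g \<le> lI \<alpha> a b f"
  proof -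
    have "lI \<alpha> a b g \<le> lI \<alpha> a b g / s"
      using lI_pos s_pos norm by (simp add: s_def le_divide_eq)
    also have "\<dots> = lI \<alpha> a b f"
      using lI_mult_on_interval[OF scaled] s_pos by (simp add: norm_divide power_divide)
    finally show ?thesis .
  qed
  ultimately have "LI_witness \<alpha> \<epsilon> a b f"
    using supp large mu_pos s_pos by (auto simp: LI_witness_def f_def)
  then show ?thesis by (rule that)
qed

lemma LI_witness_R_op_lower_bound:
  assumes "LI_witness \<alpha> \<epsilon> a b f" and "\<forall>k\<in>{a..b}. F k = z * f k"
  shows "\<epsilon>\<^sup>2 / 2 * (cmod z)\<^sup>2 \<le> (\<Sum>k\<in>{a..b}. (cmod (R_op \<alpha> F k))\<^sup>2)"
proof -
  have mu_pos: "0 < mu \<alpha> a b" and large: "\<epsilon>\<^sup>2 * mu \<alpha> a b < lI \<alpha> a b f"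
    using assms(1) by (auto simp: LI_witness_def)
  have "mu \<alpha> a b * ((cmod z)\<^sup>2 * \<epsilon>\<^sup>2) \<le> (cmod z)\<^sup>2 * lI \<alpha> a b f"
    using mult_right_mono[OF less_imp_le[OF large], of "(cmod z)\<^sup>2"] by (simp add: algebra_simps)
  also have "\<dots> = lI \<alpha> a b F"
    using lI_mult_on_interval[OF assms(2)] ..
  also have "\<dots> \<le> mu \<alpha> a b * (2 * (\<Sum>k\<in>{a..b}. (cmod (R_op \<alpha> F k))\<^sup>2))"
    using lI_le_R_op[of \<alpha> a b F] by simp
  finally have "(cmod z)\<^sup>2 * \<epsilon>\<^sup>2 \<le> 2 * (\<Sum>k\<in>{a..b}. (cmod (R_op \<alpha> F k))\<^sup>2)"
    using mu_pos by simp
  then show ?thesis by (simp add: field_simps)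
qed

section \<open>Blocks of the (\<epsilon>,L)-sequence\<close>

lemma eLseq_finite_le:
  assumes "eLseq \<alpha> \<epsilon> N \<noteq> \<infinity>" and "m \<le> N"
  shows "eLseq \<alpha> \<epsilon> m \<noteq> \<infinity>"
  using assms by (induction N) (auto simp: le_Suc_eq split: enat.splits)

lemma eLseq_Suc_enat:
  assumes "eLseq \<alpha> \<epsilon> m = enat a" and "eLseq \<alpha> \<epsilon> (Suc m) = enat b"
  shows "a < b \<and> \<epsilon> < LI \<alpha> a (b - 1)"
proof -
  have ex: "\<exists>t. a < t \<and> \<epsilon> < LI \<alpha> a (t - 1)"
    using assms by (auto split: if_splits)
  then have "b = (LEAST t. a < t \<and> \<epsilon> < LI \<alpha> a (t - 1))"
    using assms by simp
  then show ?thesis using LeastI_ex[OF ex] by simp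
qed

lemma eLseq_finite_obtains_blocks:
  assumes "eLseq \<alpha> \<epsilon> N \<noteq> \<infinity>"
  obtains c where "strict_mono c" and "c 0 = 0" and "\<forall>j<N. \<epsilon> < LI \<alpha> (c j) (c (Suc j) - 1)"
proof -
  \<comment> \<open>beyond N, continue by unit steps so that c is strictly monotone everywhere\<close>
  define c where "c m = (if m \<le> N then the_enat (eLseq \<alpha> \<epsilon> m) else the_enat (eLseq \<alpha> \<epsilon> N) + (m - N))"
    for m
  have enat_c: "eLseq \<alpha> \<epsilon> m = enat (c m)" if "m \<le> N" for m
    using eLseq_finite_le[OF assms that] that by (auto simp: c_def)
  have block: "c j < c (Suc j) \<and> \<epsilon> < LI \<alpha> (c j) (c (Suc j) - 1)" if "j < N" for j
    using eLseq_Suc_enat[OF enat_c enat_c] that by simp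
  have "c j < c (Suc j)" for j
    using block[of j] by (cases "j < N") (auto simp: c_def)
  then have "strict_mono c" by (simp add: strict_mono_Suc_iff)
  moreover have "c 0 = 0" by (simp add: c_def zero_enat_def)
  ultimately show ?thesis using that block by blast
qed

lemma sum_blocks_mono:
  fixes c :: "nat \<Rightarrow> nat"
  assumes "mono c"
  shows "(\<Sum>j<N. \<Sum>k\<in>{c j..<c (Suc j)}. h k) = (\<Sum>k\<in>{c 0..<c N}. h k)"
proof (induction N)
  case (Suc N)
  have "c 0 \<le> c N" "c N \<le> c (Suc N)" using assms by (simp_all add: monoD)
  then show ?case using Suc by (simp add: sum.atLeastLessThan_concat)
qed simp

lemma mono_block_unique:
  fixes c :: "nat \<Rightarrow> nat"
  assumes "mono c" and "k \<in> {c i..<c (Suc i)}" and "k \<in> {c j..<c (Suc j)}"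
  shows "i = j"
  using monoD[OF assms(1), of "Suc i" j] monoD[OF assms(1), of "Suc j" i] assms(2,3)
  by (cases i j rule: linorder_cases) auto

context
  fixes \<alpha> :: "nat \<Rightarrow> complex" and \<epsilon> :: real
    and c :: "nat \<Rightarrow> nat" and f :: "nat \<Rightarrow> nat \<Rightarrow> complex" and N :: nat
  assumes strict_mono_c: "strict_mono c"
    and witnesses: "\<forall>j<N. LI_witness \<alpha> \<epsilon> (c j) (c (Suc j) - 1) (f j)"
begin

lemma block_atLeastAtMost_eq: "{c j..c (Suc j) - 1} = {c j..<c (Suc j)}"
  using strict_mono_c[THEN strict_monoD, of j "Suc j"] by auto

lemma witness_zero_off_block: "j < N \<Longrightarrow> k \<notin> {c j..<c (Suc j)} \<Longrightarrow> f j k = 0"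
  using witnesses unfolding LI_witness_def block_atLeastAtMost_eq by blast

lemma combination_on_block:
  assumes "j < N" and "k \<in> {c j..<c (Suc j)}"
  shows "(\<Sum>i<N. z i * f i k) = z j * f j k"
proof -
  have "f i k = 0" if "i \<in> {..<N} - {j}" for i
    using that assms witness_zero_off_block mono_block_unique[OF strict_mono_mono[OF strict_mono_c]]
    by blast
  then show ?thesis using assms(1) by (simp add: sum.remove)
qed

lemma combination_beyond_blocks:
  assumes "c N \<le> k"
  shows "(\<Sum>i<N. z i * f i k) = 0"
proof -
  have "f i k = 0" if "i < N" for i
    using that assms witness_zero_off_block strict_mono_less_eq[OF strict_mono_c, of "Suc i" N]
    by fastforce
  then show ?thesis by simp
qed

lemma combination_norm:
  "(\<Sum>k\<in>{c 0..<c N}. (cmod (\<Sum>i<N. z i * f i k))\<^sup>2) = (\<Sum>j<N. (cmod (z j))\<^sup>2)"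
proof -
  have "(\<Sum>k\<in>{c j..<c (Suc j)}. (cmod (\<Sum>i<N. z i * f i k))\<^sup>2) = (cmod (z j))\<^sup>2" if "j < N" for j
  proof -
    have "(\<Sum>k\<in>{c j..<c (Suc j)}. (cmod (\<Sum>i<N. z i * f i k))\<^sup>2)
        = (cmod (z j))\<^sup>2 * (\<Sum>k\<in>{c j..c (Suc j) - 1}. (cmod (f j k))\<^sup>2)"
      unfolding block_atLeastAtMost_eq using that
      by (simp add: combination_on_block sum_distrib_left norm_mult power_mult_distrib)
    then show ?thesis using witnesses that by (simp add: LI_witness_def)
  qed
  then show ?thesis
    by (subst sum_blocks_mono[OF strict_mono_mono[OF strict_mono_c], symmetric]) simp
qed

lemma R_op_combination_lower_bound:
  "\<epsilon>\<^sup>2 / 2 * (\<Sum>j<N. (cmod (z j))\<^sup>2)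
    \<le> (\<Sum>k\<in>{c 0..<c N}. (cmod (R_op \<alpha> (\<lambda>k. \<Sum>i<N. z i * f i k) k))\<^sup>2)"
proof -
  have "\<epsilon>\<^sup>2 / 2 * (cmod (z j))\<^sup>2
      \<le> (\<Sum>k\<in>{c j..<c (Suc j)}. (cmod (R_op \<alpha> (\<lambda>k. \<Sum>i<N. z i * f i k) k))\<^sup>2)" if "j < N" for j
    using LI_witness_R_op_lower_bound[of \<alpha> \<epsilon> "c j" "c (Suc j) - 1" "f j"] witnesses that
    unfolding block_atLeastAtMost_eq by (simp add: combination_on_block)
  then have "(\<Sum>j<N. \<epsilon>\<^sup>2 / 2 * (cmod (z j))\<^sup>2)
      \<le> (\<Sum>j<N. \<Sum>k\<in>{c j..<c (Suc j)}. (cmod (R_op \<alpha> (\<lambda>k. \<Sum>i<N. z i * f i k) k))\<^sup>2)"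
    by (intro sum_mono) simp
  then show ?thesis
    by (simp add: sum_blocks_mono[OF strict_mono_mono[OF strict_mono_c]] sum_distrib_left)
qed


lemma witness_in_l2: "j < N \<Longrightarrow> f j \<in> l2"
  using witness_zero_off_block by (intro l2_finite_support[of "c (Suc j)"]) auto

lemma approx_num_R_op_ge:
  assumes "c 0 = 0" and "0 \<le> \<epsilon>" and "1 \<le> N"
  shows "ennreal (\<epsilon> / sqrt 2) \<le> approx_num (R_op \<alpha>) N"
proof (rule approx_num_geI)
  fix P assume P: "linear_l2 P" "rank_le P (N - 1)"
  obtain z where unit: "(\<Sum>j<N. (cmod (z j))\<^sup>2) = 1"
    and kernel: "P (\<lambda>k. \<Sum>j<N. z j * f j k) = (\<lambda>k. 0)"
    using rank_le_obtains_unit_kernel_combination[OF P, where m = N and g = f] witness_in_l2 assms(3)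
    by auto
  let ?F = "\<lambda>k. \<Sum>j<N. z j * f j k"
  have supp: "\<forall>k\<ge>c N. ?F k = 0"
    using combination_beyond_blocks by blast
  have "l2norm ?F = 1"
    using l2norm_finite_support[OF supp] combination_norm[of z] unit assms(1)
    by (simp add: atLeast0LessThan)
  moreover have "ennreal (\<epsilon> / sqrt 2) \<le> l2norm (\<lambda>k. R_op \<alpha> ?F k - P ?F k)"
  proof -
    have "\<epsilon> / sqrt 2 = sqrt (\<epsilon>\<^sup>2 / 2)"
      using assms(2) by (simp add: real_sqrt_divide)
    also have "\<dots> \<le> sqrt (\<Sum>k<c N. (cmod (R_op \<alpha> ?F k))\<^sup>2)"
      using R_op_combination_lower_bound[of z] unit assms(1) by (simp add: atLeast0LessThan)
    finally have "ennreal (\<epsilon> / sqrt 2) \<le> l2norm (R_op \<alpha> ?F)"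
      using l2norm_ge_partial_sum order_trans ennreal_leI by blast
    then show ?thesis using kernel by simp
  qed
  ultimately show "\<exists>g\<in>l2. l2norm g \<le> 1 \<and> ennreal (\<epsilon> / sqrt 2) \<le> l2norm (\<lambda>k. R_op \<alpha> g k - P g k)"
    using l2_finite_support[OF supp] by (intro bexI[of _ ?F]) auto
qed

end

theorem lemma4p3:
  fixes \<alpha> :: "nat \<Rightarrow> complex" and \<epsilon> :: real and N :: nat
  assumes "\<alpha> \<in> l2" and "\<epsilon> > 0" and "N \<ge> 1"
    and "eLseq \<alpha> \<epsilon> N < \<infinity>"
  shows "approx_num (R_op \<alpha>) N \<ge> ennreal (\<epsilon> / sqrt 2)"
proof -
  obtain c where c: "strict_mono c" "c 0 = 0" and LI_gt: "\<forall>j<N. \<epsilon> < LI \<alpha> (c j) (c (Suc j) - 1)"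
    using eLseq_finite_obtains_blocks[of \<alpha> \<epsilon> N] assms(4) by auto
  have "\<forall>j<N. \<exists>f. LI_witness \<alpha> \<epsilon> (c j) (c (Suc j) - 1) f"
    using LI_gt LI_witness_exists assms(2) by (metis less_imp_le)
  then obtain f where "\<forall>j<N. LI_witness \<alpha> \<epsilon> (c j) (c (Suc j) - 1) (f j)"
    by metis
  from approx_num_R_op_ge[OF c(1) this c(2)] show ?thesis
    using assms(2,3) by simp
qed

end
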